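(* Let $p(x)=a_0+a_1x+\dots+a_dx^d$, $d\ge1$, have positive integer coefficients, $r=p(1)$, and fix a type map $\tau$ as in the context. For every $q\in(0,1/a_0)$, every integer $k\ge1$ and every $x\in[0,1]$, the derivative $$\mathcal T^k_{p,q}(x)=\frac{\partial^k}{\partial s^k}S^p_{q,s}(x)\Big|_{s=q}$$ exists, and the function $\mathcal T^k_{p,q}$ is continuous on $[0,1]$.
   Context: Let $\mathcal A=\{0,1,\dots,r-1\}$ and let $\tau:\mathcal A\to\{0,\dots,d\}$ be a fixed map with $|\tau^{-1}(j)|=a_j$ for each $j$. For $q\in(0,1/a_0)$ let $t_q\in(0,1)$ be the unique solution in $(0,1)$ of $a_0q^d+a_1q^{d-1}t+\dots+a_dt^d=q^{d-1}$, and let $\nu_q$ be the product (Bernoulli) measure on $\mathcal A^{\mathbb N}$ whose coordinates are i.i.d. with $\nu_q(\omega_i=a)=t_q^{\tau(a)}/q^{\tau(a)-1}$. Let $F_q(y)=\nu_q\big(\{\omega:\sum_{i\ge1}\omega_ir^{-i}\le y\}\big)$ for $y\in[0,1]$; $F_q$ is a continuous strictly increasing bijection of $[0,1]$. For $q_1,q_2\in(0,1/a_0)$ put $S^p_{q_1,q_2}=F_{q_2}\circ F_{q_1}^{-1}$ (equivalently, $S^p_{q_1,q_2}$ maps the point with a given "$q_1$-$r$-adic" digit sequence to the point with the same digit sequence in the $q_2$-$r$-adic representation). *)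

theory Defs
  imports "HOL-Probability.Probability"
begin

text \<open>The polynomial p(x) = a 0 + a 1 x + ... + a d x^d is given by its coefficient
  function a and degree d; r = p(1). Digits are 0..r-1, tau is the type map.\<close>

definition rdig :: "(nat \<Rightarrow> nat) \<Rightarrow> nat \<Rightarrow> nat" where
  "rdig a d = (\<Sum>j\<le>d. a j)"

definition tq :: "(nat \<Rightarrow> nat) \<Rightarrow> nat \<Rightarrow> real \<Rightarrow> real" where
  "tq a d q = (THE t. 0 < t \<and> t < 1 \<and>
      (\<Sum>j\<le>d. real (a j) * q ^ (d - j) * t ^ j) = q ^ (d - 1))"

definition digit_weight :: "(nat \<Rightarrow> nat) \<Rightarrow> nat \<Rightarrow> (nat \<Rightarrow> nat) \<Rightarrow> real \<Rightarrow> nat \<Rightarrow> real" where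
  "digit_weight a d tau q i =
     (if i < rdig a d then tq a d q ^ tau i * q / q ^ tau i else 0)"

definition nu :: "(nat \<Rightarrow> nat) \<Rightarrow> nat \<Rightarrow> (nat \<Rightarrow> nat) \<Rightarrow> real \<Rightarrow> nat stream measure" where
  "nu a d tau q = stream_space (measure_pmf (embed_pmf (digit_weight a d tau q)))"

definition Fq :: "(nat \<Rightarrow> nat) \<Rightarrow> nat \<Rightarrow> (nat \<Rightarrow> nat) \<Rightarrow> real \<Rightarrow> real \<Rightarrow> real" where
  "Fq a d tau q y = measure (nu a d tau q)
     {\<omega> \<in> space (nu a d tau q). (\<Sum>i. real (\<omega> !! i) / real (rdig a d) ^ Suc i) \<le> y}"

definition Sp :: "(nat \<Rightarrow> nat) \<Rightarrow> nat \<Rightarrow> (nat \<Rightarrow> nat) \<Rightarrow> real \<Rightarrow> real \<Rightarrow> real \<Rightarrow> real" where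
  "Sp a d tau q1 q2 x = Fq a d tau q2 (inv_into {0..1} (Fq a d tau q1) x)"

definition kth_deriv_exists :: "(real \<Rightarrow> real) \<Rightarrow> nat \<Rightarrow> real \<Rightarrow> bool" where
  "kth_deriv_exists g k s0 \<longleftrightarrow>
     (\<forall>j. j + 1 < k \<longrightarrow> (\<forall>\<^sub>F s in nhds s0. (deriv ^^ j) g differentiable (at s))) \<and>
     (deriv ^^ (k - 1)) g differentiable (at s0)"

definition Tk :: "(nat \<Rightarrow> nat) \<Rightarrow> nat \<Rightarrow> (nat \<Rightarrow> nat) \<Rightarrow> nat \<Rightarrow> real \<Rightarrow> real \<Rightarrow> real" where
  "Tk a d tau k q x = (deriv ^^ k) (\<lambda>s. Sp a d tau q s x) q"

end

(*
  The distribution function F_s of the digit measure nu_s is the weighted digit series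
  sum_n w(d_0) ... w(d_(n-1)) (w 0 + ... + w (d_n - 1)) in the digits d_i of y, with the weights
  w c = u^tau(c) / p(u) where p(u) = 1/s. Near a positive root this equation has a holomorphic local
  inverse s |-> u(s), and the series converges uniformly for complex weights of modulus below some
  rho < 1. Hence s |-> S_(q,s)(x) = F_s(F_q^-1(x)) is the restriction of a holomorphic function,
  so all its derivatives exist. The series is also uniformly continuous in y, uniformly in the
  weights (it oscillates by O(rho^n) on cells of level n); Cauchy's estimates transfer this to the
  k-th derivative in s, and composing with the continuous inverse F_q^-1 gives continuity of T^k.
*)

theory Submission
  imports Defs "HOL-Complex_Analysis.Complex_Analysis"
begin

section \<open>Base-r digits\<close>

text \<open>rdigit r n y is the base-r digit of y at position n + 1 after the point (digits are counted from 0).\<close>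

definition rdigit :: "nat \<Rightarrow> nat \<Rightarrow> real \<Rightarrow> nat" where
  "rdigit r n y = nat \<lfloor>real r ^ Suc n * y\<rfloor> mod r"

lemma rdigit_less: "0 < r \<Longrightarrow> rdigit r n y < r"
  by (simp add: rdigit_def)

lemma rdigit_at_0: "rdigit r n 0 = 0"
  by (simp add: rdigit_def)

lemma rdigit_0_bounds:
  assumes "0 \<le> y" "y < 1" "0 < r"
  shows "real (rdigit r 0 y) \<le> real r * y" "real r * y < real (rdigit r 0 y) + 1"
proof -
  have f0: "0 \<le> \<lfloor>real r * y\<rfloor>" using assms by simp
  have "\<lfloor>real r * y\<rfloor> < int r" using assms by (simp add: floor_less_iff)
  then have "rdigit r 0 y = nat \<lfloor>real r * y\<rfloor>"
    using f0 by (simp add: rdigit_def nat_less_iff)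
  then show "real (rdigit r 0 y) \<le> real r * y" "real r * y < real (rdigit r 0 y) + 1"
    using f0 by linarith+
qed

lemma rdigit_0_eqI:
  assumes "real c \<le> real r * y" "real r * y < real c + 1" "c < r"
  shows "rdigit r 0 y = c"
proof -
  have "\<lfloor>real r * y\<rfloor> = int c" using assms by linarith
  then show ?thesis using assms by (simp add: rdigit_def)
qed

lemma rdigit_Suc:
  assumes "0 \<le> y" "y < 1" "0 < r"
  shows "rdigit r (Suc n) y = rdigit r n (real r * y - real (rdigit r 0 y))"
proof -
  define c where "c = rdigit r 0 y"
  have c: "real c \<le> real r * y"
    using rdigit_0_bounds[OF assms] by (auto simp: c_def)
  have "real r ^ Suc (Suc n) * y = real r ^ Suc n * (real r * y - real c) + real (c * r ^ Suc n)"
    by (simp add: algebra_simps)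
  then have "\<lfloor>real r ^ Suc (Suc n) * y\<rfloor> = \<lfloor>real r ^ Suc n * (real r * y - real c)\<rfloor> + int (c * r ^ Suc n)"
    by (metis floor_add_int of_int_of_nat_eq)
  moreover have "0 \<le> \<lfloor>real r ^ Suc n * (real r * y - real c)\<rfloor>"
    using c by simp
  ultimately have "nat \<lfloor>real r ^ Suc (Suc n) * y\<rfloor> = nat \<lfloor>real r ^ Suc n * (real r * y - real c)\<rfloor> + c * r ^ Suc n"
    by (simp only: nat_add_distrib[OF _ of_nat_0_le_iff] nat_int)
  then show ?thesis
    unfolding c_def[symmetric] rdigit_def[of r "Suc n"] rdigit_def[of r n]
    by (simp add: mult.left_commute[of c])
qed

lemma split_cell_index:
  fixes r j :: nat
  assumes "0 < r" "j < r ^ Suc n"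
  obtains c j' where "c < r" "j = c * r ^ n + j'" "j' < r ^ n"
proof (rule that[of "j div r ^ n" "j mod r ^ n"])
  show "j div r ^ n < r" using assms by (simp add: less_mult_imp_div_less mult.commute)
qed (use assms div_mult_mod_eq[of j "r ^ n"] in simp_all)

lemma rescale_cell:
  assumes r: "0 < r" and j: "j = c * r ^ n + j'" "j' < r ^ n"
    and z: "real j / real r ^ Suc n \<le> z" "z \<le> (real j + 1) / real r ^ Suc n"
  shows "real c / real r \<le> z" "z \<le> (real c + 1) / real r"
    "real j' / real r ^ n \<le> real r * z - real c" "real r * z - real c \<le> (real j' + 1) / real r ^ n"
proof -
  have rn: "0 < real r ^ n" using r by simp
  have jr: "real j = real c * real r ^ n + real j'" "real j' + 1 \<le> real r ^ n"
    using j by (simp, metis Suc_leI of_nat_Suc of_nat_le_iff of_nat_power add.commute)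
  have a: "real j \<le> z * real r * real r ^ n" "z * real r * real r ^ n \<le> real j + 1"
    using z r rn by (simp_all add: field_simps)
  have "real c * real r ^ n \<le> (z * real r) * real r ^ n" "(z * real r) * real r ^ n \<le> (real c + 1) * real r ^ n"
    using a jr by (simp_all add: algebra_simps)
  then have "real c \<le> z * real r" "z * real r \<le> real c + 1"
    using rn by simp_all
  then show "real c / real r \<le> z" "z \<le> (real c + 1) / real r"
    using r by (simp_all add: field_simps)
  have "real j' \<le> (real r * z - real c) * real r ^ n" "(real r * z - real c) * real r ^ n \<le> real j' + 1"
    using a jr by (simp_all add: algebra_simps)
  then show "real j' / real r ^ n \<le> real r * z - real c" "real r * z - real c \<le> (real j' + 1) / real r ^ n"
    by (simp_all add: pos_divide_le_eq[OF rn] pos_le_divide_eq[OF rn])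
qed

section \<open>The weighted digit series\<close>

text \<open>The cell of [0,1) with leading base-r digits d_0, ..., d_(n-1) receives the weight
  w d_0 * ... * w d_(n-1); the series adds up the weights of the cells to the left of y. For
  probability weights this is the distribution function of the digit product measure; for complex
  weights it depends holomorphically on them.\<close>

definition cdf_term :: "(nat \<Rightarrow> complex) \<Rightarrow> nat \<Rightarrow> real \<Rightarrow> nat \<Rightarrow> complex" where
  "cdf_term w r y n = (\<Prod>m<n. w (rdigit r m y)) * (\<Sum>c<rdigit r n y. w c)"

definition cdf_series :: "(nat \<Rightarrow> complex) \<Rightarrow> nat \<Rightarrow> real \<Rightarrow> complex" where
  "cdf_series w r y = (if 1 \<le> y then 1 else suminf (cdf_term w r y))"

definition contracting_weights :: "(nat \<Rightarrow> complex) \<Rightarrow> nat \<Rightarrow> real \<Rightarrow> bool" where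
  "contracting_weights w r \<rho> \<longleftrightarrow>
     2 \<le> r \<and> 0 \<le> \<rho> \<and> \<rho> < 1 \<and> (\<forall>c<r. norm (w c) \<le> \<rho>) \<and> (\<Sum>c<r. w c) = 1"

lemma cdf_series_at_0: "cdf_series w r 0 = 0"
proof -
  have "cdf_term w r 0 = (\<lambda>_. 0)" by (auto simp: cdf_term_def rdigit_at_0)
  then show ?thesis by (simp add: cdf_series_def)
qed

context
  fixes w r \<rho>
  assumes cw: "contracting_weights w r \<rho>"
begin

lemma contracting_weights_facts:
  shows "0 < r" "0 \<le> \<rho>" "\<rho> < 1" "\<And>c. c < r \<Longrightarrow> norm (w c) \<le> \<rho>"
  using cw by (auto simp: contracting_weights_def)

lemma norm_partial_weight_sum_le: "c \<le> r \<Longrightarrow> norm (\<Sum>i<c. w i) \<le> real r"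
proof -
  assume c: "c \<le> r"
  have "norm (\<Sum>i<c. w i) \<le> (\<Sum>i<c. norm (w i))" by (rule norm_sum)
  also have "\<dots> \<le> (\<Sum>i<c. 1)"
  proof (intro sum_mono)
    fix i assume "i \<in> {..<c}"
    then show "norm (w i) \<le> 1"
      using c contracting_weights_facts(3) contracting_weights_facts(4)[of i] by simp
  qed
  finally show ?thesis using c by simp
qed

lemma norm_cdf_term_le: "norm (cdf_term w r y n) \<le> real r * \<rho> ^ n"
proof -
  note f = contracting_weights_facts
  have "norm (\<Prod>m<n. w (rdigit r m y)) \<le> (\<Prod>m<n. norm (w (rdigit r m y)))"
    by (rule norm_prod_le)
  also have "\<dots> \<le> (\<Prod>m<n. \<rho>)"
    using f rdigit_less by (intro prod_mono) auto
  finally have "norm (\<Prod>m<n. w (rdigit r m y)) \<le> \<rho> ^ n" by simp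
  then have "norm (cdf_term w r y n) \<le> \<rho> ^ n * real r"
    unfolding cdf_term_def norm_mult
    using norm_partial_weight_sum_le[OF less_imp_le[OF rdigit_less[OF f(1)]]] f(2)
    by (intro mult_mono) auto
  then show ?thesis by (simp add: mult.commute)
qed

lemma summable_geometric_bound: "summable (\<lambda>n. real r * \<rho> ^ n)"
  using contracting_weights_facts by (intro summable_mult summable_geometric) auto

lemma summable_cdf_term: "summable (cdf_term w r y)"
  by (rule summable_comparison_test[OF _ summable_geometric_bound]) (use norm_cdf_term_le in auto)

lemma one_le_series_bound: "1 \<le> real r / (1 - \<rho>)"
  using cw by (simp add: contracting_weights_def field_simps)

lemma norm_cdf_series_le: "norm (cdf_series w r y) \<le> real r / (1 - \<rho>)"
proof (cases "1 \<le> y")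
  case True then show ?thesis using one_le_series_bound by (simp add: cdf_series_def)
next
  case False
  note f = contracting_weights_facts
  have sn: "summable (\<lambda>n. norm (cdf_term w r y n))"
    by (rule summable_comparison_test[OF _ summable_geometric_bound]) (use norm_cdf_term_le in auto)
  have "norm (suminf (cdf_term w r y)) \<le> (\<Sum>n. norm (cdf_term w r y n))"
    by (rule summable_norm[OF sn])
  also have "\<dots> \<le> (\<Sum>n. real r * \<rho> ^ n)"
    by (rule suminf_le) (use norm_cdf_term_le summable_geometric_bound sn in auto)
  also have "\<dots> = real r / (1 - \<rho>)"
    using f suminf_geometric[of \<rho>] suminf_mult[of "\<lambda>n. \<rho> ^ n" "real r"]
    by (simp add: summable_geometric divide_inverse)
  finally show ?thesis using False by (simp add: cdf_series_def)
qed

lemma cdf_series_rec: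
  assumes y: "0 \<le> y" "y < 1"
  shows "cdf_series w r y = (\<Sum>c<rdigit r 0 y. w c) +
           w (rdigit r 0 y) * cdf_series w r (real r * y - real (rdigit r 0 y))"
proof -
  note r0 = contracting_weights_facts(1)
  define c where "c = rdigit r 0 y"
  define y' where "y' = real r * y - real c"
  have "0 \<le> y'" "y' < 1" using rdigit_0_bounds[OF y r0] by (auto simp: c_def y'_def)
  then have "cdf_term w r y' sums cdf_series w r y'"
    using summable_cdf_term by (simp add: cdf_series_def summable_sums)
  moreover have "cdf_term w r y (Suc n) = w c * cdf_term w r y' n" for n
    unfolding cdf_term_def prod.lessThan_Suc_shift
    using rdigit_Suc[OF y r0] by (simp add: c_def y'_def)
  ultimately have "(\<lambda>n. cdf_term w r y (Suc n)) sums (w c * cdf_series w r y')"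
    by (simp add: sums_mult)
  then have "cdf_term w r y sums (w c * cdf_series w r y' + cdf_term w r y 0)"
    by (simp add: sums_Suc_iff)
  then have "suminf (cdf_term w r y) = w c * cdf_series w r y' + (\<Sum>i<c. w i)"
    by (simp add: sums_iff cdf_term_def c_def)
  then show ?thesis using y by (simp add: cdf_series_def c_def[symmetric] y'_def[symmetric])
qed

lemma cdf_series_rec_closed:
  assumes c: "c < r" and y: "real c / real r \<le> y" "y \<le> (real c + 1) / real r"
  shows "cdf_series w r y = (\<Sum>i<c. w i) + w c * cdf_series w r (real r * y - real c)"
proof -
  note r0 = contracting_weights_facts(1)
  have y0: "0 \<le> y" using y(1) divide_nonneg_nonneg[of "real c" "real r"] by linarith
  show ?thesis
  proof (cases "y < (real c + 1) / real r")
    case True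
    have "(real c + 1) / real r \<le> 1" using c r0 by (simp add: field_simps)
    then have y1: "y < 1" using True by linarith
    have "rdigit r 0 y = c"
      using True y r0 c by (intro rdigit_0_eqI) (auto simp: field_simps)
    then show ?thesis using cdf_series_rec[OF y0 y1] by simp
  next
    case False
    then have yy: "y = (real c + 1) / real r" using y by simp
    have ry: "real r * y - real c = 1" using r0 yy by (simp add: field_simps)
    show ?thesis
    proof (cases "Suc c = r")
      case True
      then have "y = 1" using yy r0 by simp
      then show ?thesis
        using cw ry by (simp add: cdf_series_def contracting_weights_def flip: True)
    next
      case False
      then have c2: "Suc c < r" using c by simp
      then have "(real c + 1) / real r < 1" using r0 by (simp add: field_simps)
      then have y1: "y < 1" using yy by simp
      have d: "rdigit r 0 y = Suc c"
        using yy c2 r0 by (intro rdigit_0_eqI) (auto simp: field_simps)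
      have "real r * y - real (Suc c) = 0" using ry by simp
      then have "cdf_series w r y = (\<Sum>i<Suc c. w i)"
        using cdf_series_rec[OF y0 y1] d by (simp add: cdf_series_at_0)
      then show ?thesis using ry by (simp add: cdf_series_def)
    qed
  qed
qed

text \<open>The self-similarity maps a cell of level n + 1 onto a cell of level n and scales differences
  by a weight of norm at most rho.\<close>

lemma cdf_series_cell_oscillation:
  assumes "y \<in> {0..1}" "y' \<in> {0..1}"
    and "real j / real r ^ n \<le> y" "y \<le> (real j + 1) / real r ^ n"
    and "real j / real r ^ n \<le> y'" "y' \<le> (real j + 1) / real r ^ n"
  shows "norm (cdf_series w r y - cdf_series w r y') \<le> 2 * (real r / (1 - \<rho>)) * \<rho> ^ n"
  using assms
proof (induction n arbitrary: j y y')
  case 0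
  have "norm (cdf_series w r y - cdf_series w r y') \<le> norm (cdf_series w r y) + norm (cdf_series w r y')"
    by (rule norm_triangle_ineq4)
  also have "\<dots> \<le> 2 * (real r / (1 - \<rho>))"
    using norm_cdf_series_le[of y] norm_cdf_series_le[of y'] by simp
  finally show ?case by simp
next
  case (Suc n)
  note f = contracting_weights_facts
  show ?case
  proof (cases "j < r ^ Suc n")
    case False
    then have "real r ^ Suc n \<le> real j" by (metis not_less of_nat_le_iff of_nat_power)
    then have "1 \<le> real j / real r ^ Suc n" using f(1) by simp
    then have "y = 1" "y' = 1" using Suc.prems by auto
    then show ?thesis using f one_le_series_bound by simp
  next
    case True
    obtain c j' where c: "c < r" and jc: "j = c * r ^ n + j'" "j' < r ^ n"
      using split_cell_index[OF f(1) True] .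
    note y = rescale_cell[OF f(1) jc Suc.prems(3,4)]
    note y' = rescale_cell[OF f(1) jc Suc.prems(5,6)]
    have in01: "real r * z - real c \<in> {0..1}"
      if "real c / real r \<le> z" "z \<le> (real c + 1) / real r" for z
      using that f(1) by (simp add: field_simps)
    have "cdf_series w r y - cdf_series w r y' =
        w c * (cdf_series w r (real r * y - real c) - cdf_series w r (real r * y' - real c))"
      using cdf_series_rec_closed[OF c y(1,2)] cdf_series_rec_closed[OF c y'(1,2)]
      by (simp add: algebra_simps)
    then have "norm (cdf_series w r y - cdf_series w r y') =
        norm (w c) * norm (cdf_series w r (real r * y - real c) - cdf_series w r (real r * y' - real c))"
      by (simp add: norm_mult)
    also have "\<dots> \<le> \<rho> * (2 * (real r / (1 - \<rho>)) * \<rho> ^ n)"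
      by (intro mult_mono f(4)[OF c] Suc.IH[OF in01[OF y(1,2)] in01[OF y'(1,2)] y(3,4) y'(3,4)])
        (simp_all add: f(2))
    finally show ?thesis by (simp add: algebra_simps)
  qed
qed

text \<open>An interval of length at most r^-n meets at most two adjacent cells of level n.\<close>

lemma cdf_series_modulus:
  assumes y: "y \<in> {0..1}" "y' \<in> {0..1}" and d: "\<bar>y - y'\<bar> \<le> 1 / real r ^ n"
  shows "norm (cdf_series w r y - cdf_series w r y') \<le> 4 * (real r / (1 - \<rho>)) * \<rho> ^ n"
proof -
  note f = contracting_weights_facts
  have rn: "0 < real r ^ n" using f(1) by simp
  define B where "B = 2 * (real r / (1 - \<rho>)) * \<rho> ^ n"
  have "norm (cdf_series w r a - cdf_series w r b) \<le> 2 * B"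
    if ab: "0 \<le> a" "a \<le> b" "b \<le> 1" "b - a \<le> 1 / real r ^ n" for a b
  proof -
    define j where "j = nat \<lfloor>a * real r ^ n\<rfloor>"
    have "0 \<le> \<lfloor>a * real r ^ n\<rfloor>" using ab rn by simp
    then have jr: "real j \<le> a * real r ^ n" "a * real r ^ n < real j + 1"
      unfolding j_def by linarith+
    have ja: "real j / real r ^ n \<le> a" "a \<le> (real j + 1) / real r ^ n"
      using jr rn by (simp_all add: field_simps)
    have "b * real r ^ n \<le> a * real r ^ n + 1" using ab rn by (simp add: field_simps)
    then have bj: "b \<le> (real (Suc j) + 1) / real r ^ n" using jr rn by (simp add: field_simps)
    have osc: "B \<ge> 0" using f one_le_series_bound by (simp add: B_def)
    show ?thesis
    proof (cases "b \<le> (real j + 1) / real r ^ n")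
      case True
      then have "norm (cdf_series w r a - cdf_series w r b) \<le> B"
        unfolding B_def using ab ja by (intro cdf_series_cell_oscillation) auto
      then show ?thesis using osc by linarith
    next
      case False
      define m where "m = real (Suc j) / real r ^ n"
      have m: "a \<le> m" "m \<le> b" using ja False by (auto simp: m_def add.commute)
      have n1: "norm (cdf_series w r a - cdf_series w r m) \<le> B"
        unfolding B_def using ab ja m by (intro cdf_series_cell_oscillation[of _ _ j]) (auto simp: m_def add.commute)
      have n2: "norm (cdf_series w r m - cdf_series w r b) \<le> B"
        unfolding B_def using ab bj m by (intro cdf_series_cell_oscillation[of _ _ "Suc j"]) (auto simp: m_def)
      show ?thesis using norm_diff_triangle_le[OF n1 n2] by simp
    qed
  qed
  from this[of y y'] this[of y' y] show ?thesis
    using y d by (cases "y \<le> y'") (auto simp: B_def norm_minus_commute)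
qed

end

lemma cdf_series_uniformly_equicontinuous:
  assumes \<rho>: "0 \<le> \<rho>" "\<rho> < 1" and e: "0 < e"
  obtains d where "0 < d"
    "\<And>w y y'. contracting_weights w r \<rho> \<Longrightarrow> y \<in> {0..1} \<Longrightarrow> y' \<in> {0..1} \<Longrightarrow> \<bar>y - y'\<bar> < d \<Longrightarrow>
       norm (cdf_series w r y - cdf_series w r y') < e"
proof (cases "r = 0")
  case True
  then show ?thesis using that[of 1] by (simp add: contracting_weights_def)
next
  case False
  define B where "B = 4 * (real r / (1 - \<rho>))"
  have B: "0 < B" using False \<rho> by (simp add: B_def)
  obtain n where "\<rho> ^ n < e / B"
    using real_arch_pow_inv[of "e / B" \<rho>] e B \<rho> by auto
  then have n: "B * \<rho> ^ n < e" using B by (simp add: field_simps)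
  show ?thesis
  proof (rule that[of "1 / real r ^ n"])
    show "0 < 1 / real r ^ n" using False by simp
    fix w y y'
    assume "contracting_weights w r \<rho>" "y \<in> {0..1}" "y' \<in> {0..1}" "\<bar>y - y'\<bar> < 1 / real r ^ n"
    then have "norm (cdf_series w r y - cdf_series w r y') \<le> B * \<rho> ^ n"
      unfolding B_def by (intro cdf_series_modulus) auto
    then show "norm (cdf_series w r y - cdf_series w r y') < e" using n by simp
  qed
qed

lemma continuous_on_cdf_series:
  assumes cw: "contracting_weights w r \<rho>"
  shows "continuous_on {0..1} (cdf_series w r)"
  unfolding continuous_on_iff
proof (intro ballI allI impI)
  fix y e :: real assume y: "y \<in> {0..1}" and e: "0 < e"
  obtain d where "0 < d" and d: "\<And>w y y'. contracting_weights w r \<rho> \<Longrightarrow> y \<in> {0..1} \<Longrightarrow>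
      y' \<in> {0..1} \<Longrightarrow> \<bar>y - y'\<bar> < d \<Longrightarrow> norm (cdf_series w r y - cdf_series w r y') < e"
    using cdf_series_uniformly_equicontinuous contracting_weights_facts(2,3)[OF cw] e by metis
  then show "\<exists>d>0. \<forall>y'\<in>{0..1}. dist y' y < d \<longrightarrow> dist (cdf_series w r y') (cdf_series w r y) < e"
    using d[OF cw _ y] by (auto simp: dist_norm dist_real_def)
qed

lemma cdf_series_cong:
  assumes "0 < r" "\<And>c. c < r \<Longrightarrow> w c = w' c"
  shows "cdf_series w r y = cdf_series w' r y"
proof -
  have "cdf_term w r y n = cdf_term w' r y n" for n
    unfolding cdf_term_def using assms rdigit_less[OF assms(1)]
    by (intro arg_cong2[where f="(*)"] prod.cong sum.cong) (auto, meson lessThan_iff order.strict_trans)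
  then have "cdf_term w r y = cdf_term w' r y" by blast
  then show ?thesis by (simp add: cdf_series_def)
qed

lemma cdf_series_cell_increment_pos:
  assumes cw: "contracting_weights w r \<rho>" and pos: "\<And>c. c < r \<Longrightarrow> 0 < Re (w c) \<and> Im (w c) = 0"
    and j: "j < r ^ n"
  shows "Re (cdf_series w r (real j / real r ^ n)) < Re (cdf_series w r ((real j + 1) / real r ^ n))"
  using j
proof (induction n arbitrary: j)
  case 0
  then show ?case using cdf_series_at_0[of w r] by (simp add: cdf_series_def[of w r 1])
next
  case (Suc n)
  note f = contracting_weights_facts[OF cw]
  obtain c j' where c: "c < r" and jc: "j = c * r ^ n + j'" "j' < r ^ n"
    using split_cell_index[OF f(1) Suc.prems] .
  have rn: "0 < real r ^ n" using f(1) by simp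
  have jr: "real j = real c * real r ^ n + real j'" using jc by simp
  have rescale: "real r * ((real j + x) / real r ^ Suc n) - real c = (real j' + x) / real r ^ n" for x
    using f(1) rn jr by (simp add: field_simps)
  have cell: "real c / real r \<le> (real j + x) / real r ^ Suc n \<and> (real j + x) / real r ^ Suc n \<le> (real c + 1) / real r"
    if "x \<in> {0, 1}" for x
    using rescale_cell[OF f(1) jc, of "(real j + x) / real r ^ Suc n"] that rn f(1)
    by (auto simp: field_simps)
  have rec: "cdf_series w r ((real j + x) / real r ^ Suc n) =
      (\<Sum>i<c. w i) + w c * cdf_series w r ((real j' + x) / real r ^ n)" if "x \<in> {0, 1}" for x
  proof -
    from cell[OF that] have "real c / real r \<le> (real j + x) / real r ^ Suc n"
      "(real j + x) / real r ^ Suc n \<le> (real c + 1) / real r" by auto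
    from cdf_series_rec_closed[OF cw c this] show ?thesis by (simp only: rescale)
  qed
  have "cdf_series w r ((real j + 1) / real r ^ Suc n) - cdf_series w r (real j / real r ^ Suc n) =
      w c * (cdf_series w r ((real j' + 1) / real r ^ n) - cdf_series w r (real j' / real r ^ n))"
    using rec[of 1] rec[of 0] by (simp add: algebra_simps)
  then have "Re (cdf_series w r ((real j + 1) / real r ^ Suc n) - cdf_series w r (real j / real r ^ Suc n)) =
      Re (w c) * Re (cdf_series w r ((real j' + 1) / real r ^ n) - cdf_series w r (real j' / real r ^ n))"
    using pos[OF c] by simp
  moreover have "0 < Re (cdf_series w r ((real j' + 1) / real r ^ n) - cdf_series w r (real j' / real r ^ n))"
    using Suc.IH[OF jc(2)] by simp
  ultimately have "0 < Re (cdf_series w r ((real j + 1) / real r ^ Suc n) - cdf_series w r (real j / real r ^ Suc n))"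
    using pos[OF c] by (simp only: mult_pos_pos)
  then show ?case by simp
qed

lemma holomorphic_cdf_series:
  assumes S: "open S" and hol: "\<And>c. c < r \<Longrightarrow> (\<lambda>z. W z c) holomorphic_on S"
    and cw: "\<And>z. z \<in> S \<Longrightarrow> contracting_weights (W z) r \<rho>" and \<rho>: "0 \<le> \<rho>" "\<rho> < 1" and r: "0 < r"
  shows "(\<lambda>z. cdf_series (W z) r y) holomorphic_on S"
proof (cases "1 \<le> y")
  case True
  then show ?thesis by (simp add: cdf_series_def)
next
  case False
  have "(\<lambda>z. cdf_term (W z) r y n) holomorphic_on S" for n
    unfolding cdf_term_def using rdigit_less[OF r] hol
    by (intro holomorphic_intros) (meson lessThan_iff order.strict_trans)+
  then have holN: "(\<lambda>z. \<Sum>i<N. cdf_term (W z) r y i) holomorphic_on S" for N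
    by (intro holomorphic_intros)
  have ul: "uniform_limit S (\<lambda>N z. \<Sum>i<N. cdf_term (W z) r y i) (\<lambda>z. suminf (cdf_term (W z) r y)) sequentially"
    by (rule Weierstrass_m_test[where M="\<lambda>n. real r * \<rho> ^ n"])
       (use norm_cdf_term_le[OF cw] \<rho> in \<open>auto intro!: summable_mult summable_geometric\<close>)
  have eq: "(\<lambda>z. cdf_series (W z) r y) = (\<lambda>z. suminf (cdf_term (W z) r y))"
    using False by (simp add: cdf_series_def)
  show ?thesis unfolding eq
  proof (rule holomorphic_uniform_sequence[OF S holN])
    fix z assume "z \<in> S"
    then obtain d where "0 < d" "cball z d \<subseteq> S"
      using S open_contains_cball by blast
    then show "\<exists>d>0. cball z d \<subseteq> S \<and> uniform_limit (cball z d)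
        (\<lambda>N z. \<Sum>i<N. cdf_term (W z) r y i) (\<lambda>z. suminf (cdf_term (W z) r y)) sequentially"
      using uniform_limit_on_subset[OF ul] by blast
  qed
qed

section \<open>Holomorphic functions of a real parameter\<close>

lemma higher_deriv_Re_of_holomorphic:
  fixes G :: "complex \<Rightarrow> complex" and \<phi> :: "real \<Rightarrow> real"
  assumes hol: "G holomorphic_on V" and V: "open V"
    and I: "open I" "\<And>s. s \<in> I \<Longrightarrow> complex_of_real s \<in> V"
    and \<phi>: "\<And>s. s \<in> I \<Longrightarrow> \<phi> s = Re (G (complex_of_real s))"
    and s: "s \<in> I"
  shows "(deriv ^^ k) \<phi> s = Re ((deriv ^^ k) G (complex_of_real s))"
    "((deriv ^^ k) \<phi> has_real_derivative Re ((deriv ^^ Suc k) G (complex_of_real s))) (at s)"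
proof -
  have Re_deriv: "((\<lambda>t. Re ((deriv ^^ k) G (complex_of_real t))) has_real_derivative
      Re ((deriv ^^ Suc k) G (complex_of_real s))) (at s)" if s: "s \<in> I" for s k
  proof -
    have "((deriv ^^ k) G has_field_derivative deriv ((deriv ^^ k) G) (complex_of_real s)) (at (complex_of_real s))"
      using holomorphic_higher_deriv[OF hol V] V I(2)[OF s] by (rule holomorphic_derivI)
    then have "((\<lambda>t. (deriv ^^ k) G (complex_of_real t)) has_vector_derivative
        deriv ((deriv ^^ k) G) (complex_of_real s)) (at s)"
      by (rule has_vector_derivative_real_field)
    then show ?thesis by (simp add: has_field_derivative_Re)
  qed
  have "(deriv ^^ k) \<phi> s = Re ((deriv ^^ k) G (complex_of_real s)) \<and>
      ((deriv ^^ k) \<phi> has_real_derivative Re ((deriv ^^ Suc k) G (complex_of_real s))) (at s)"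
    using s
  proof (induction k arbitrary: s)
    case 0
    then show ?case
      using has_field_derivative_transform_within_open[OF Re_deriv[OF 0, of 0] I(1) 0] \<phi> by simp
  next
    case (Suc k)
    have eq: "(deriv ^^ Suc k) \<phi> s' = Re ((deriv ^^ Suc k) G (complex_of_real s'))" if "s' \<in> I" for s'
      using Suc.IH[OF that] DERIV_imp_deriv by fastforce
    show ?case
      using has_field_derivative_transform_within_open[OF Re_deriv[OF Suc.prems, of "Suc k"] I(1) Suc.prems]
        eq Suc.prems by simp
  qed
  then show "(deriv ^^ k) \<phi> s = Re ((deriv ^^ k) G (complex_of_real s))"
    "((deriv ^^ k) \<phi> has_real_derivative Re ((deriv ^^ Suc k) G (complex_of_real s))) (at s)"
    by auto
qed

text \<open>Cauchy's estimate turns uniform closeness of G y and G y' into closeness of their derivatives.\<close>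

lemma continuous_on_higher_deriv_parametric:
  fixes G :: "'a::metric_space \<Rightarrow> complex \<Rightarrow> complex"
  assumes S: "open S" and R: "0 < R" "cball z0 R \<subseteq> S"
    and hol: "\<And>y. y \<in> Y \<Longrightarrow> G y holomorphic_on S"
    and equicont: "\<And>e. 0 < e \<Longrightarrow> \<exists>d>0. \<forall>y\<in>Y. \<forall>y'\<in>Y. dist y y' < d \<longrightarrow>
        (\<forall>z\<in>S. norm (G y z - G y' z) < e)"
    and k: "0 < k"
  shows "continuous_on Y (\<lambda>y. (deriv ^^ k) (G y) z0)"
  unfolding continuous_on_iff
proof (intro ballI allI impI)
  fix x and e :: real assume x: "x \<in> Y" and e: "0 < e"
  define \<epsilon> where "\<epsilon> = e * R ^ k / fact k / 2"
  have \<epsilon>: "0 < \<epsilon>" using e R by (simp add: \<epsilon>_def)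
  obtain d where d: "0 < d"
    "\<And>y y' z. y \<in> Y \<Longrightarrow> y' \<in> Y \<Longrightarrow> dist y y' < d \<Longrightarrow> z \<in> S \<Longrightarrow> norm (G y z - G y' z) < \<epsilon>"
    using equicont[OF \<epsilon>] by blast
  show "\<exists>d>0. \<forall>x'\<in>Y. dist x' x < d \<longrightarrow> dist ((deriv ^^ k) (G x') z0) ((deriv ^^ k) (G x) z0) < e"
  proof (intro exI[of _ d] conjI ballI impI)
    fix x' assume x': "x' \<in> Y" and dx: "dist x' x < d"
    define f where "f = (\<lambda>z. G x' z - G x z)"
    have z0: "z0 \<in> S" using R by auto
    have holf: "f holomorphic_on S" unfolding f_def using hol x x' by (intro holomorphic_intros)
    have "norm ((deriv ^^ k) f z0) \<le> fact k * \<epsilon> / R ^ k"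
    proof (rule Cauchy_higher_deriv_bound[where y=0])
      show "f holomorphic_on ball z0 R"
        using holf R ball_subset_cball by (meson holomorphic_on_subset order.trans)
      show "continuous_on (cball z0 R) f"
        using holf R holomorphic_on_imp_continuous_on continuous_on_subset by blast
      show "f w \<in> ball 0 \<epsilon>" if "w \<in> ball z0 R" for w
      proof -
        have "w \<in> S" using that R by auto
        then show ?thesis using d(2)[OF x' x dx] by (simp add: f_def)
      qed
    qed (use R k in auto)
    moreover have "(deriv ^^ k) f z0 = (deriv ^^ k) (G x') z0 - (deriv ^^ k) (G x) z0"
      unfolding f_def using hol x x' S z0 by (intro higher_deriv_diff) auto
    moreover have "fact k * \<epsilon> / R ^ k < e" using e R by (simp add: \<epsilon>_def)
    ultimately show "dist ((deriv ^^ k) (G x') z0) ((deriv ^^ k) (G x) z0) < e"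
      by (simp add: dist_norm)
  qed (use d in simp)
qed

section \<open>The distribution function of the digit product measure\<close>

definition digit_value :: "nat \<Rightarrow> nat stream \<Rightarrow> real" where
  "digit_value r \<omega> = (\<Sum>i. real (\<omega> !! i) / real r ^ Suc i)"

definition digit_cdf :: "nat \<Rightarrow> (nat \<Rightarrow> real) \<Rightarrow> real \<Rightarrow> real" where
  "digit_cdf r p y = measure (stream_space (measure_pmf (embed_pmf p)))
     {\<omega> \<in> space (stream_space (measure_pmf (embed_pmf p))). digit_value r \<omega> \<le> y}"

definition digit_distribution :: "nat \<Rightarrow> (nat \<Rightarrow> real) \<Rightarrow> bool" where
  "digit_distribution r p \<longleftrightarrow> 2 \<le> r \<and> (\<forall>c. 0 \<le> p c) \<and> (\<forall>c. r \<le> c \<longrightarrow> p c = 0) \<and> (\<Sum>c<r. p c) = 1"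

lemma nn_integral_digit_distribution: "digit_distribution r p \<Longrightarrow> (\<integral>\<^sup>+x. ennreal (p x) \<partial>count_space UNIV) = 1"
proof -
  assume ok: "digit_distribution r p"
  have "(\<integral>\<^sup>+x. ennreal (p x) \<partial>count_space UNIV) = (\<Sum>x<r. ennreal (p x))"
    using ok by (intro nn_integral_count_space') (auto simp: digit_distribution_def)
  also have "\<dots> = ennreal (\<Sum>x<r. p x)" using ok by (intro sum_ennreal) (auto simp: digit_distribution_def)
  also have "\<dots> = 1" using ok by (simp add: digit_distribution_def)
  finally show ?thesis .
qed

lemma pmf_embed_digit_distribution: "digit_distribution r p \<Longrightarrow> pmf (embed_pmf p) c = p c"
  by (rule pmf_embed_pmf) (auto simp: digit_distribution_def nn_integral_digit_distribution)

lemma set_pmf_embed_digit_distribution: "digit_distribution r p \<Longrightarrow> set_pmf (embed_pmf p) \<subseteq> {..<r}"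
  using set_embed_pmf[of p] nn_integral_digit_distribution[of r p] by (auto simp: digit_distribution_def not_less)

lemma digit_value_bounds:
  assumes r: "1 < r" and dg: "\<forall>i. \<omega> !! i < r"
  shows "summable (\<lambda>i. real (\<omega> !! i) / real r ^ Suc i)" "0 \<le> digit_value r \<omega>" "digit_value r \<omega> \<le> 1"
proof -
  have b: "real (\<omega> !! i) / real r ^ Suc i \<le> (real r - 1) * (1 / real r) * (1 / real r) ^ i" for i
  proof -
    have "real (\<omega> !! i) \<le> real r - 1" using dg[rule_format, of i] by linarith
    then have "real (\<omega> !! i) / real r ^ Suc i \<le> (real r - 1) / real r ^ Suc i"
      using r by (intro divide_right_mono) auto
    then show ?thesis by (simp add: power_divide field_simps)
  qed
  have r1: "1 / real r < 1" using r by simp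
  have sg: "summable (\<lambda>i. (real r - 1) * (1 / real r) * (1 / real r) ^ i)"
    using r1 by (intro summable_mult summable_geometric) simp
  show s: "summable (\<lambda>i. real (\<omega> !! i) / real r ^ Suc i)"
    by (rule summable_comparison_test[OF _ sg]) (use b in auto)
  show "0 \<le> digit_value r \<omega>" unfolding digit_value_def by (intro suminf_nonneg s) auto
  have "digit_value r \<omega> \<le> (\<Sum>i. (real r - 1) * (1 / real r) * (1 / real r) ^ i)"
    unfolding digit_value_def by (rule suminf_le[OF b s sg])
  also have "\<dots> = (real r - 1) * (1 / real r) * (\<Sum>i. (1 / real r) ^ i)"
    by (rule suminf_mult) (use r1 in auto)
  also have "\<dots> = (real r - 1) * (1 / real r) * (1 / (1 - 1 / real r))"
    by (subst suminf_geometric) (use r1 in auto)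
  also have "\<dots> = 1"
    using r by (simp add: field_simps)
  finally show "digit_value r \<omega> \<le> 1" .
qed

lemma digit_value_SCons:
  assumes r: "1 < r" and dg: "\<forall>i. \<omega> !! i < r"
  shows "digit_value r (t ## \<omega>) = real t / real r + digit_value r \<omega> / real r"
proof -
  define f where "f = (\<lambda>i. real ((t ## \<omega>) !! i) / real r ^ Suc i)"
  have s: "summable (\<lambda>i. real (\<omega> !! i) / real r ^ Suc i)" using digit_value_bounds[OF r dg] by simp
  have fs: "f (Suc i) = (1 / real r) * (real (\<omega> !! i) / real r ^ Suc i)" for i
    by (simp add: f_def)
  have sf: "summable (\<lambda>i. f (Suc i))" unfolding fs using s by (rule summable_mult)
  then have sf': "summable f" by (simp add: summable_Suc_iff)
  have "(\<Sum>i. f (Suc i)) = suminf f - f 0" by (rule suminf_split_head[OF sf'])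
  moreover have "(\<Sum>i. f (Suc i)) = (1 / real r) * digit_value r \<omega>"
    unfolding fs digit_value_def by (rule suminf_mult[OF s])
  ultimately have sf: "suminf f = f 0 + (1 / real r) * digit_value r \<omega>" by simp
  have v: "digit_value r (t ## \<omega>) = suminf f" unfolding digit_value_def f_def ..
  have f0: "f 0 = real t / real r" by (simp add: f_def)
  show ?thesis using v f0 sf by simp
qed

context
  fixes r p
  assumes ok: "digit_distribution r p"
begin

abbreviation "\<mu> \<equiv> measure_pmf (embed_pmf p)"
abbreviation "\<Omega> \<equiv> stream_space \<mu>"

lemma prob_space_digit_space: "prob_space \<Omega>"
  by (rule prob_space.prob_space_stream_space) (rule prob_space_measure_pmf)

lemma sets_digit_value_le: "{\<omega> \<in> space \<Omega>. digit_value r \<omega> \<le> y} \<in> sets \<Omega>"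
  unfolding digit_value_def by measurable

lemma sets_digit_value_SCons_le: "{\<omega> \<in> space \<Omega>. digit_value r (t ## \<omega>) \<le> y} \<in> sets \<Omega>"
  unfolding digit_value_def by measurable

lemma AE_digits_less: "AE \<omega> in \<Omega>. \<forall>i. \<omega> !! i < r"
proof -
  have "AE \<omega> in \<Omega>. stream_all (\<lambda>x. x < r) \<omega>"
  proof (rule prob_space.AE_stream_all[OF prob_space_measure_pmf])
    show "AE x in \<mu>. x < r" using set_pmf_embed_digit_distribution[OF ok] by (auto simp: AE_measure_pmf_iff)
  qed simp
  then show ?thesis by eventually_elim (auto simp: sset_range)
qed

lemma digit_base_gt_1: "1 < r" using ok by (simp add: digit_distribution_def)

lemma digit_base_pos: "0 < r" using digit_base_gt_1 by simp

lemma digit_cdf_eq_1: "1 \<le> z \<Longrightarrow> digit_cdf r p z = 1"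
proof -
  assume z: "1 \<le> z"
  interpret P: prob_space \<Omega> by (rule prob_space_digit_space)
  have "digit_cdf r p z = measure \<Omega> (space \<Omega>)"
    unfolding digit_cdf_def
  proof (rule measure_eq_AE)
    show "AE \<omega> in \<Omega>. (\<omega> \<in> {\<omega> \<in> space \<Omega>. digit_value r \<omega> \<le> z}) = (\<omega> \<in> space \<Omega>)"
    proof -
      have vz: "\<And>\<omega>. \<forall>i. \<omega> !! i < r \<Longrightarrow> digit_value r \<omega> \<le> z"
        using digit_value_bounds(3)[OF digit_base_gt_1] z by (meson order.trans)
      show ?thesis using AE_digits_less by eventually_elim (use vz in auto)
    qed
  qed (use sets_digit_value_le in auto)
  then show ?thesis by (simp add: P.prob_space)
qed

lemma digit_cdf_eq_0: "z < 0 \<Longrightarrow> digit_cdf r p z = 0"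
proof -
  assume z: "z < 0"
  have "digit_cdf r p z = measure \<Omega> {}"
    unfolding digit_cdf_def
  proof (rule measure_eq_AE)
    show "AE \<omega> in \<Omega>. (\<omega> \<in> {\<omega> \<in> space \<Omega>. digit_value r \<omega> \<le> z}) = (\<omega> \<in> {})"
      using AE_digits_less by eventually_elim (use digit_value_bounds[OF digit_base_gt_1] z in force)
  qed (use sets_digit_value_le in auto)
  then show ?thesis by simp
qed

lemma measure_digit_value_SCons_le: "t < r \<Longrightarrow> measure \<Omega> {\<omega> \<in> space \<Omega>. digit_value r (t ## \<omega>) \<le> y} = digit_cdf r p (real r * y - real t)"
proof -
  assume t: "t < r"
  have eq: "digit_value r (t ## \<omega>) \<le> y \<longleftrightarrow> digit_value r \<omega> \<le> real r * y - real t" if "\<forall>i. \<omega> !! i < r" for \<omega>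
  proof -
    have "digit_value r (t ## \<omega>) = (real t + digit_value r \<omega>) / real r"
      using digit_value_SCons[OF digit_base_gt_1 that, of t] by (simp add: add_divide_distrib)
    then have "digit_value r (t ## \<omega>) \<le> y \<longleftrightarrow> real t + digit_value r \<omega> \<le> y * real r"
      using digit_base_pos by (simp add: pos_divide_le_eq)
    then show ?thesis by (simp add: algebra_simps)
  qed
  show ?thesis
    unfolding digit_cdf_def
  proof (rule measure_eq_AE)
    show "AE \<omega> in \<Omega>. (\<omega> \<in> {\<omega> \<in> space \<Omega>. digit_value r (t ## \<omega>) \<le> y}) = (\<omega> \<in> {\<omega> \<in> space \<Omega>. digit_value r \<omega> \<le> real r * y - real t})"
      using AE_digits_less by eventually_elim (use eq in auto)
  qed (use sets_digit_value_le sets_digit_value_SCons_le in auto)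
qed

lemma digit_cdf_nonneg: "0 \<le> digit_cdf r p y" by (simp add: digit_cdf_def)

lemma digit_cdf_first_digit:
  "digit_cdf r p y = (\<Sum>t<r. digit_cdf r p (real r * y - real t) * p t)"
proof -
  interpret P: prob_space \<Omega> by (rule prob_space_digit_space)
  have "ennreal (digit_cdf r p y) =
      (\<integral>\<^sup>+t. ennreal (measure \<Omega> {\<omega> \<in> space \<Omega>. digit_value r (t ## \<omega>) \<le> y}) \<partial>\<mu>)"
    unfolding digit_cdf_def
    using prob_space.prob_stream_space[OF prob_space_measure_pmf sets_digit_value_le] by simp
  also have "\<dots> = (\<Sum>t<r. ennreal (measure \<Omega> {\<omega> \<in> space \<Omega>. digit_value r (t ## \<omega>) \<le> y}) * pmf (embed_pmf p) t)"
    by (rule nn_integral_measure_pmf_support) (use set_pmf_embed_digit_distribution[OF ok] in auto)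
  also have "\<dots> = (\<Sum>t<r. ennreal (digit_cdf r p (real r * y - real t) * p t))"
    using measure_digit_value_SCons_le pmf_embed_digit_distribution[OF ok] ok
    by (intro sum.cong) (auto simp: digit_distribution_def ennreal_mult digit_cdf_nonneg)
  also have "\<dots> = ennreal (\<Sum>t<r. digit_cdf r p (real r * y - real t) * p t)"
    using ok digit_cdf_nonneg by (intro sum_ennreal) (auto simp: digit_distribution_def)
  finally show ?thesis
    using ok digit_cdf_nonneg by (subst (asm) ennreal_inj) (auto simp: digit_distribution_def intro!: sum_nonneg)
qed

lemma digit_cdf_rec:
  assumes y: "0 \<le> y" "y < 1"
  shows "digit_cdf r p y =
    (\<Sum>t<rdigit r 0 y. p t) + p (rdigit r 0 y) * digit_cdf r p (real r * y - real (rdigit r 0 y))"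
proof -
  define c where "c = rdigit r 0 y"
  have c1: "real c \<le> real r * y" "real r * y < real c + 1"
    using rdigit_0_bounds[OF y digit_base_pos] by (auto simp: c_def)
  have cr: "c < r" using rdigit_less[OF digit_base_pos] by (simp add: c_def)
  have "digit_cdf r p y = (\<Sum>t<r. digit_cdf r p (real r * y - real t) * p t)"
    by (rule digit_cdf_first_digit)
  also have "\<dots> = (\<Sum>t\<in>{0..<Suc c}. digit_cdf r p (real r * y - real t) * p t) +
        (\<Sum>t\<in>{Suc c..<r}. digit_cdf r p (real r * y - real t) * p t)"
    unfolding lessThan_atLeast0 by (rule sum.atLeastLessThan_concat[symmetric]) (use cr in auto)
  also have "(\<Sum>t\<in>{Suc c..<r}. digit_cdf r p (real r * y - real t) * p t) = 0"
  proof (intro sum.neutral ballI)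
    fix t assume "t \<in> {Suc c..<r}"
    then have "real r * y - real t < 0" using c1 by auto
    then show "digit_cdf r p (real r * y - real t) * p t = 0" by (simp add: digit_cdf_eq_0)
  qed
  also have "(\<Sum>t\<in>{0..<Suc c}. digit_cdf r p (real r * y - real t) * p t) =
      (\<Sum>t<c. digit_cdf r p (real r * y - real t) * p t) + digit_cdf r p (real r * y - real c) * p c"
    by (simp add: atLeast0LessThan)
  also have "(\<Sum>t<c. digit_cdf r p (real r * y - real t) * p t) = (\<Sum>t<c. p t)"
  proof (intro sum.cong refl)
    fix t assume "t \<in> {..<c}"
    then have "1 \<le> real r * y - real t" using c1 by auto
    then show "digit_cdf r p (real r * y - real t) * p t = p t" by (simp add: digit_cdf_eq_1)
  qed
  finally show ?thesis by (simp add: c_def)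
qed

lemma digit_cdf_le_1: "digit_cdf r p y \<le> 1"
proof -
  interpret P: prob_space \<Omega> by (rule prob_space_digit_space)
  show ?thesis unfolding digit_cdf_def by simp
qed

lemma digit_cdf_mono: "y \<le> y' \<Longrightarrow> digit_cdf r p y \<le> digit_cdf r p y'"
proof -
  assume yy: "y \<le> y'"
  interpret P: prob_space \<Omega> by (rule prob_space_digit_space)
  show ?thesis unfolding digit_cdf_def
    by (rule P.finite_measure_mono) (use yy sets_digit_value_le in auto)
qed

text \<open>Both sides are bounded and satisfy the same self-similarity relation, whose multiplier
  is at most rho on every cell; so their difference is below any rho ^ n.\<close>

lemma digit_cdf_eq_Re_cdf_series:
  assumes cw: "contracting_weights (\<lambda>c. complex_of_real (p c)) r \<rho>" and y: "y \<in> {0..1}"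
  shows "digit_cdf r p y = Re (cdf_series (\<lambda>c. complex_of_real (p c)) r y)"
proof -
  define w where "w = (\<lambda>c. complex_of_real (p c))"
  define D where "D = (\<lambda>y. digit_cdf r p y - Re (cdf_series w r y))"
  define K where "K = 1 + real r / (1 - \<rho>)"
  note f = contracting_weights_facts[OF cw]
  have K: "0 < K" using one_le_series_bound[OF cw] by (simp add: K_def)
  have D_bound: "\<bar>D y\<bar> \<le> K" for y
  proof -
    have "\<bar>Re (cdf_series w r y)\<bar> \<le> real r / (1 - \<rho>)"
      using norm_cdf_series_le[OF cw, of y] abs_Re_le_cmod order.trans unfolding w_def by blast
    then show ?thesis
      using digit_cdf_nonneg[of y] digit_cdf_le_1[of y] by (simp add: D_def K_def abs_if split: if_splits)
  qed
  have D_rec: "D y = p (rdigit r 0 y) * D (real r * y - real (rdigit r 0 y))" if "0 \<le> y" "y < 1" for y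
    using cdf_series_rec[OF cw that] digit_cdf_rec[OF that]
    by (simp add: D_def w_def algebra_simps flip: of_real_sum)
  have "\<bar>D y\<bar> \<le> K * \<rho> ^ n" if "y \<in> {0..1}" for n y
    using that
  proof (induction n arbitrary: y)
    case 0
    then show ?case using D_bound by simp
  next
    case (Suc n)
    show ?case
    proof (cases "y = 1")
      case True
      then show ?thesis using f K by (simp add: D_def digit_cdf_eq_1 cdf_series_def)
    next
      case False
      then have y: "0 \<le> y" "y < 1" using Suc.prems by auto
      define c where "c = rdigit r 0 y"
      have "real r * y - real c \<in> {0..1}"
        using rdigit_0_bounds[OF y digit_base_pos] by (auto simp: c_def)
      then have "\<bar>p c\<bar> * \<bar>D (real r * y - real c)\<bar> \<le> \<rho> * (K * \<rho> ^ n)"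
        using f(2) f(4)[OF rdigit_less[OF digit_base_pos]] Suc.IH by (intro mult_mono) (auto simp: c_def)
      then show ?thesis
        using D_rec[OF y] by (simp add: c_def abs_mult algebra_simps)
    qed
  qed
  then have "\<bar>D y\<bar> \<le> K * \<rho> ^ n" for n using y by blast
  moreover have "(\<lambda>n. K * \<rho> ^ n) \<longlonglongrightarrow> 0"
    using f by (intro tendsto_mult_right_zero LIMSEQ_power_zero) auto
  ultimately have "\<bar>D y\<bar> \<le> 0"
    by (intro LIMSEQ_le_const) auto
  then show ?thesis by (simp add: D_def w_def)
qed

end

context
  fixes r p \<rho>
  assumes dist: "digit_distribution r p"
    and cw: "contracting_weights (\<lambda>c. complex_of_real (p c)) r \<rho>"
    and pos: "\<And>c. c < r \<Longrightarrow> 0 < p c"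
begin

lemma continuous_on_digit_cdf: "continuous_on {0..1} (digit_cdf r p)"
proof -
  have "continuous_on {0..1} (\<lambda>y. Re (cdf_series (\<lambda>c. complex_of_real (p c)) r y))"
    by (intro continuous_intros continuous_on_cdf_series[OF cw])
  then show ?thesis
    by (rule continuous_on_cong[THEN iffD1, rotated 2]) (simp_all add: digit_cdf_eq_Re_cdf_series[OF dist cw])
qed

lemma digit_cdf_cell_less:
  assumes "j < r ^ n"
  shows "digit_cdf r p (real j / real r ^ n) < digit_cdf r p ((real j + 1) / real r ^ n)"
proof -
  have "real j + 1 \<le> real r ^ n"
    using assms by (metis Suc_leI of_nat_Suc of_nat_le_iff of_nat_power add.commute)
  moreover have "0 < real r ^ n" using digit_base_pos[OF dist] by simp
  moreover have "real j \<le> real r ^ n" using calculation(1) by linarith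
  ultimately have "0 \<le> real j / real r ^ n" "real j / real r ^ n \<le> 1" "(real j + 1) / real r ^ n \<le> 1"
    by (simp_all add: field_simps)
  then show ?thesis
    using cdf_series_cell_increment_pos[OF cw _ assms] pos
    by (simp add: digit_cdf_eq_Re_cdf_series[OF dist cw])
qed

text \<open>Between two points of [0,1] lies a whole base-r cell of positive mass.\<close>

lemma strict_mono_on_digit_cdf: "strict_mono_on {0..1} (digit_cdf r p)"
proof (rule strict_mono_onI)
  fix y y' :: real assume y: "y \<in> {0..1}" "y' \<in> {0..1}" "y < y'"
  have r: "1 < real r" using digit_base_gt_1[OF dist] by simp
  obtain n where n: "(1 / real r) ^ n < (y' - y) / 2"
    using real_arch_pow_inv[of "(y' - y) / 2" "1 / real r"] y r by auto
  have rn: "0 < real r ^ n" using r by simp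
  have n': "2 < (y' - y) * real r ^ n" using n rn by (simp add: power_one_over field_simps)
  define j where "j = nat \<lfloor>y * real r ^ n\<rfloor> + 1"
  have "0 \<le> \<lfloor>y * real r ^ n\<rfloor>" using y rn by simp
  then have jr: "y * real r ^ n < real j" "real j \<le> y * real r ^ n + 1"
    unfolding j_def by linarith+
  have a: "y < real j / real r ^ n" using jr rn by (simp add: field_simps)
  have b: "(real j + 1) / real r ^ n < y'" using jr n' rn by (simp add: field_simps)
  have "(real j + 1) / real r ^ n < 1" using b y by simp
  then have "real j + 1 < real r ^ n" using rn by (simp add: divide_less_eq_1_pos)
  then have "real j < real r ^ n" by linarith
  then have "j < r ^ n" by (metis of_nat_less_iff of_nat_power)
  have "digit_cdf r p y \<le> digit_cdf r p (real j / real r ^ n)"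
    using a by (intro digit_cdf_mono[OF dist]) simp
  also have "\<dots> < digit_cdf r p ((real j + 1) / real r ^ n)"
    by (rule digit_cdf_cell_less) fact
  also have "\<dots> \<le> digit_cdf r p y'"
    using b by (intro digit_cdf_mono[OF dist]) simp
  finally show "digit_cdf r p y < digit_cdf r p y'" .
qed

end

lemma continuous_on_inv_into_Icc:
  fixes F :: "real \<Rightarrow> real"
  assumes cont: "continuous_on {0..1} F" and mono: "strict_mono_on {0..1} F"
    and F0: "F 0 = 0" and F1: "F 1 = 1"
  shows "F ` {0..1} = {0..1}" "continuous_on {0..1} (inv_into {0..1} F)"
proof -
  show im: "F ` {0..1} = {0..1}"
  proof
    show "F ` {0..1} \<subseteq> {0..1}"
    proof clarify
      fix x :: real assume "x \<in> {0..1}"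
      then have "F 0 \<le> F x" "F x \<le> F 1" by (auto intro!: strict_mono_on_leD[OF mono])
      then show "F x \<in> {0..1}" using F0 F1 by simp
    qed
    show "{0..1} \<subseteq> F ` {0..1}"
      using IVT'[of F 0 _ 1, OF _ _ _ cont] F0 F1 by force
  qed
  have inj: "inj_on F {0..1}" using mono by (rule strict_mono_on_imp_inj_on)
  have "continuous_on (F ` {0..1}) (the_inv_into {0..1} F)"
    by (rule continuous_on_inv_into[OF cont compact_Icc inj])
  moreover have "the_inv_into {0..1} F x = inv_into {0..1} F x" if "x \<in> F ` {0..1}" for x
    using that inj by (auto simp: the_inv_into_f_f)
  ultimately show "continuous_on {0..1} (inv_into {0..1} F)"
    using im continuous_on_cong by metis
qed

section \<open>Digit weights as functions of the polynomial variable\<close>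

text \<open>type_poly a d is the polynomial p. Substituting t = s u in the equation for t_s turns the digit
  weights of nu_s into type_weights at the positive solution u of p u = 1 / s (lemma digit_weight_eq).\<close>

definition type_poly :: "(nat \<Rightarrow> nat) \<Rightarrow> nat \<Rightarrow> 'a::comm_ring_1 \<Rightarrow> 'a" where
  "type_poly a d u = (\<Sum>j\<le>d. of_nat (a j) * u ^ j)"

definition type_weights :: "(nat \<Rightarrow> nat) \<Rightarrow> nat \<Rightarrow> (nat \<Rightarrow> nat) \<Rightarrow> complex \<Rightarrow> nat \<Rightarrow> complex" where
  "type_weights a d tau u c = u ^ tau c / type_poly a d u"

lemma type_poly_of_real: "type_poly a d (complex_of_real u) = complex_of_real (type_poly a d u)"
  by (simp add: type_poly_def)

lemma type_poly_cnj: "cnj (type_poly a d u) = type_poly a d (cnj u)"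
  by (simp add: type_poly_def cnj_sum)

lemma type_weights_of_real:
  "type_weights a d tau (complex_of_real u) c = complex_of_real (u ^ tau c / type_poly a d u)"
  by (simp add: type_weights_def type_poly_of_real)

lemma has_field_derivative_type_poly:
  "(type_poly a d has_field_derivative (\<Sum>j\<le>d. of_nat (a j) * (of_nat j * u ^ (j - 1)))) (at u)"
  unfolding type_poly_def by (intro derivative_eq_intros) auto

lemma holomorphic_on_type_poly [holomorphic_intros]:
  "f holomorphic_on A \<Longrightarrow> (\<lambda>z. type_poly a d (f z)) holomorphic_on A"
  unfolding type_poly_def by (intro holomorphic_intros)

lemma continuous_type_poly: "continuous (at u within A) (type_poly a d :: 'a::real_normed_field \<Rightarrow> 'a)"
  unfolding type_poly_def by (intro continuous_intros)

lemma Reals_of_inj_on_ball_cnj: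
  fixes f :: "complex \<Rightarrow> complex"
  assumes inj: "inj_on f (ball (complex_of_real x) \<delta>)" and cnj: "\<And>w. f (cnj w) = cnj (f w)"
    and w: "w \<in> ball (complex_of_real x) \<delta>" and fw: "f w \<in> \<real>"
  shows "w \<in> \<real>"
proof -
  have "cnj w - complex_of_real x = cnj (w - complex_of_real x)" by simp
  then have "dist (cnj w) (complex_of_real x) = dist w (complex_of_real x)"
    by (simp only: dist_norm complex_mod_cnj)
  then have "cnj w \<in> ball (complex_of_real x) \<delta>" using w by (simp add: dist_commute)
  moreover have "f (cnj w) = f w" using cnj fw by (simp add: Reals_cnj_iff)
  ultimately have "cnj w = w" using inj w by (meson inj_onD)
  then show ?thesis by (simp add: Reals_cnj_iff)
qed

locale type_map =
  fixes a :: "nat \<Rightarrow> nat" and d :: nat and tau :: "nat \<Rightarrow> nat"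
  assumes d: "d \<ge> 1"
    and a_pos: "\<forall>j\<le>d. a j > 0"
    and tau_le: "\<forall>i < rdig a d. tau i \<le> d"
    and card_tau: "\<forall>j\<le>d. card {i. i < rdig a d \<and> tau i = j} = a j"
begin

lemma sum_power_tau: "(\<Sum>c<rdig a d. (u::'a::comm_ring_1) ^ tau c) = type_poly a d u"
proof -
  have "(\<Sum>c<rdig a d. u ^ tau c) = (\<Sum>j\<le>d. \<Sum>c\<in>{x \<in> {..<rdig a d}. tau x = j}. u ^ tau c)"
    by (rule sum.group[symmetric]) (use tau_le in auto)
  also have "\<dots> = (\<Sum>j\<le>d. of_nat (a j) * u ^ j)"
  proof (rule sum.cong[OF refl])
    fix j assume "j \<in> {..d}"
    then have "card {x \<in> {..<rdig a d}. tau x = j} = a j" using card_tau by simp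
    then show "(\<Sum>c\<in>{x \<in> {..<rdig a d}. tau x = j}. u ^ tau c) = of_nat (a j) * u ^ j"
      by simp
  qed
  finally show ?thesis by (simp add: type_poly_def)
qed

lemma rdig_ge_2: "2 \<le> rdig a d"
proof -
  have "(\<Sum>j\<in>{0, 1}. a j) \<le> (\<Sum>j\<le>d. a j)"
    by (rule sum_mono2) (use d in auto)
  moreover have "1 \<le> a 0" "1 \<le> a 1" using a_pos d by (auto simp: Suc_le_eq)
  ultimately show ?thesis unfolding rdig_def by simp
qed

lemma sum_type_weights: "type_poly a d u \<noteq> 0 \<Longrightarrow> (\<Sum>c<rdig a d. type_weights a d tau u c) = 1"
  unfolding type_weights_def by (simp add: sum_divide_distrib[symmetric] sum_power_tau)

lemma type_poly_ge: "0 \<le> (u::real) \<Longrightarrow> 1 + u \<le> type_poly a d u"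
proof -
  assume u: "0 \<le> u"
  have "(\<Sum>j\<in>{0, 1}. real (a j) * u ^ j) \<le> (\<Sum>j\<le>d. real (a j) * u ^ j)"
    by (rule sum_mono2) (use d u in auto)
  moreover have "1 \<le> real (a 0)" "1 \<le> real (a 1)" using a_pos d by (auto simp: Suc_le_eq)
  then have "1 + u \<le> (\<Sum>j\<in>{0, 1}. real (a j) * u ^ j)"
    using u by (simp add: add_mono mult_le_cancel_right1)
  ultimately show ?thesis by (simp add: type_poly_def)
qed

lemma type_poly_pos: "0 \<le> (u::real) \<Longrightarrow> 0 < type_poly a d u"
  using type_poly_ge[of u] by simp

lemma type_poly_strict_mono: "0 \<le> (u::real) \<Longrightarrow> u < v \<Longrightarrow> type_poly a d u < type_poly a d v"
  unfolding type_poly_def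
proof (rule sum_strict_mono_ex1)
  assume u: "0 \<le> u" and uv: "u < v"
  show "\<forall>x\<in>{..d}. real (a x) * u ^ x \<le> real (a x) * v ^ x"
    using u uv by (auto intro!: mult_left_mono power_mono)
  show "\<exists>x\<in>{..d}. real (a x) * u ^ x < real (a x) * v ^ x"
    using d a_pos uv by (intro bexI[of _ 1]) auto
qed simp

lemma type_poly_deriv_pos:
  assumes "0 \<le> (u::real)"
  shows "0 < (\<Sum>j\<le>d. real (a j) * (real j * u ^ (j - 1)))"
proof -
  have "real (a 1) * (real 1 * u ^ (1 - 1)) \<le> (\<Sum>j\<le>d. real (a j) * (real j * u ^ (j - 1)))"
    by (rule member_le_sum) (use d assms in auto)
  moreover have "0 < real (a 1)" using a_pos d by auto
  ultimately show ?thesis by simp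
qed

lemma tq_eq:
  assumes s: "0 < s" and u: "0 < u" and P: "type_poly a d u = 1 / s"
  shows "tq a d s = s * u"
proof -
  have expand: "(\<Sum>j\<le>d. real (a j) * s ^ (d - j) * t ^ j) = s ^ d * type_poly a d (t / s)" for t
    unfolding type_poly_def sum_distrib_left
  proof (rule sum.cong[OF refl])
    fix j assume "j \<in> {..d}"
    then have "s ^ d = s ^ (d - j) * s ^ j" by (simp add: power_add[symmetric])
    then show "real (a j) * s ^ (d - j) * t ^ j = s ^ d * (real (a j) * (t / s) ^ j)"
      using s by (simp add: power_divide field_simps)
  qed
  have sd: "s ^ d = s * s ^ (d - 1)" using d by (simp add: power_eq_if)
  have eqn: "(\<Sum>j\<le>d. real (a j) * s ^ (d - j) * t ^ j) = s ^ (d - 1) \<longleftrightarrow> type_poly a d (t / s) = 1 / s" for t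
    unfolding expand sd using s by (auto simp: field_simps)
  have "u < 1 / s" using type_poly_ge[of u] u P by simp
  then have su: "s * u < 1" using s by (simp add: field_simps)
  show ?thesis unfolding tq_def
  proof (rule the_equality)
    show "0 < s * u \<and> s * u < 1 \<and> (\<Sum>j\<le>d. real (a j) * s ^ (d - j) * (s * u) ^ j) = s ^ (d - 1)"
      using s u su P eqn[of "s * u"] by simp
    fix t assume t: "0 < t \<and> t < 1 \<and> (\<Sum>j\<le>d. real (a j) * s ^ (d - j) * t ^ j) = s ^ (d - 1)"
    then have "type_poly a d (t / s) = type_poly a d u" using eqn[of t] P by simp
    moreover have "0 \<le> t / s" using t s by simp
    ultimately have "t / s = u"
      using type_poly_strict_mono[of "t / s" u] type_poly_strict_mono[of u "t / s"] u
      by (cases "t / s" u rule: linorder_cases) auto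
    then show "t = s * u" using s by (simp add: field_simps)
  qed
qed

lemma digit_weight_eq:
  assumes s: "0 < s" and u: "0 < u" and P: "type_poly a d u = 1 / s" and c: "c < rdig a d"
  shows "digit_weight a d tau s c = u ^ tau c / type_poly a d u"
proof -
  have "digit_weight a d tau s c = (s * u) ^ tau c * s / s ^ tau c"
    using c tq_eq[OF s u P] by (simp add: digit_weight_def)
  also have "\<dots> = s * u ^ tau c" using s by (simp add: power_mult_distrib)
  finally show ?thesis using P s by simp
qed

lemma type_weight_bounds:
  assumes u: "0 < (u::real)" and c: "c < rdig a d"
  shows "0 < u ^ tau c / type_poly a d u" "u ^ tau c / type_poly a d u < 1"
proof -
  have P: "0 < type_poly a d u" using type_poly_pos[of u] u by simp
  show pos: "0 < u ^ tau c / type_poly a d u" using P u by simp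
  have "(\<Sum>c<rdig a d. u ^ tau c / type_poly a d u) = 1"
    using P by (simp add: sum_divide_distrib[symmetric] sum_power_tau)
  moreover have "(\<Sum>c<rdig a d. u ^ tau c / type_poly a d u) =
      u ^ tau c / type_poly a d u + (\<Sum>c'\<in>{..<rdig a d} - {c}. u ^ tau c' / type_poly a d u)"
    using c by (subst sum.remove[of _ c]) auto
  moreover have "0 < (\<Sum>c'\<in>{..<rdig a d} - {c}. u ^ tau c' / type_poly a d u)"
  proof (rule sum_pos)
    have "(if c = 0 then 1 else 0) \<in> {..<rdig a d} - {c}" using rdig_ge_2 by auto
    then show "{..<rdig a d} - {c} \<noteq> {}" by blast
  qed (use P u in auto)
  ultimately show "u ^ tau c / type_poly a d u < 1" by linarith
qed

lemma exists_type_poly_eq: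
  assumes q: "0 < q" "q < 1 / real (a 0)"
  obtains u where "0 < u" "type_poly a d u = 1 / q"
proof -
  have P0: "type_poly a d (0::real) = real (a 0)"
    by (simp add: type_poly_def power_0_left sum.atMost_shift)
  have "real (a 0) * q < 1" using q a_pos by (simp add: field_simps)
  then have "type_poly a d (0::real) \<le> 1 / q" using P0 q by (simp add: field_simps)
  moreover have "1 / q \<le> type_poly a d (1 / q)" using type_poly_ge[of "1 / q"] q by simp
  moreover have "\<forall>x. 0 \<le> x \<and> x \<le> 1 / q \<longrightarrow> isCont (type_poly a d) x"
    using continuous_type_poly by blast
  ultimately obtain u where u: "0 \<le> u" "type_poly a d u = 1 / q"
    using IVT[of "type_poly a d" 0 "1 / q" "1 / q"] q by auto
  moreover have "u \<noteq> 0" using u P0 q a_pos \<open>real (a 0) * q < 1\<close> by (auto simp: field_simps)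
  ultimately show ?thesis by (intro that[of u]) auto
qed

lemma type_weights_bounded_near:
  assumes u0: "0 < u0"
  obtains \<rho> \<delta> where "0 \<le> \<rho>" "\<rho> < 1" "0 < \<delta>"
    "\<And>u. u \<in> ball (complex_of_real u0) \<delta> \<Longrightarrow>
       type_poly a d u \<noteq> 0 \<and> (\<forall>c<rdig a d. norm (type_weights a d tau u c) \<le> \<rho>)"
proof -
  define r where "r = rdig a d"
  define U0 where "U0 = complex_of_real u0"
  define m where "m = Max ((\<lambda>c. u0 ^ tau c / type_poly a d u0) ` {..<r})"
  have r: "0 < r" using rdig_ge_2 by (simp add: r_def)
  have m1: "m < 1"
    unfolding m_def using r type_weight_bounds[OF u0] by (subst Max_less_iff) (auto simp: r_def)
  have m_ge: "u0 ^ tau c / type_poly a d u0 \<le> m" if "c < r" for c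
    unfolding m_def using that by (intro Max_ge) auto
  have m0: "0 \<le> m" using m_ge[OF r] type_weight_bounds(1)[OF u0, of 0] r by (simp add: r_def)
  define \<rho> where "\<rho> = (1 + m) / 2"
  have \<rho>: "0 \<le> \<rho>" "\<rho> < 1" using m0 m1 by (auto simp: \<rho>_def)
  have PU0: "type_poly a d U0 \<noteq> 0"
    using type_poly_pos[of u0] u0 by (simp add: U0_def type_poly_of_real)
  have "eventually (\<lambda>u. type_poly a d u \<noteq> 0) (nhds U0)"
    using tendsto_imp_eventually_ne[OF continuous_type_poly[of U0 UNIV, unfolded isCont_def] PU0] PU0
    by (simp add: eventually_nhds_conv_at)
  moreover have "eventually (\<lambda>u. norm (type_weights a d tau u c) < \<rho>) (nhds U0)" if c: "c < r" for c
  proof -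
    have cont: "isCont (\<lambda>u. norm (type_weights a d tau u c)) U0"
      unfolding type_weights_def using PU0 by (intro continuous_intros continuous_type_poly)
    have "norm (type_weights a d tau U0 c) = u0 ^ tau c / type_poly a d u0"
      unfolding U0_def type_weights_of_real norm_of_real
      using type_weight_bounds(1)[OF u0, of c] c by (intro abs_of_pos) (simp add: r_def)
    then have "norm (type_weights a d tau U0 c) \<le> m" using m_ge[OF c] by simp
    moreover have "m < \<rho>" using m1 by (simp add: \<rho>_def)
    ultimately have "norm (type_weights a d tau U0 c) < \<rho>" by simp
    with cont show ?thesis by (simp add: isCont_def order_tendstoD eventually_nhds_conv_at)
  qed
  then have "eventually (\<lambda>u. \<forall>c\<in>{..<r}. norm (type_weights a d tau u c) < \<rho>) (nhds U0)"
    by (intro eventually_ball_finite) auto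
  ultimately have "eventually (\<lambda>u. type_poly a d u \<noteq> 0 \<and>
      (\<forall>c\<in>{..<r}. norm (type_weights a d tau u c) < \<rho>)) (nhds U0)"
    by (rule eventually_conj)
  then obtain \<delta> where \<delta>: "0 < \<delta>" "\<And>u. dist u U0 < \<delta> \<Longrightarrow>
      type_poly a d u \<noteq> 0 \<and> (\<forall>c\<in>{..<r}. norm (type_weights a d tau u c) < \<rho>)"
    unfolding eventually_nhds_metric by blast
  show ?thesis
  proof (rule that[OF \<rho> \<delta>(1)])
    fix u assume "u \<in> ball (complex_of_real u0) \<delta>"
    then have "dist u U0 < \<delta>" by (simp add: U0_def dist_commute)
    then show "type_poly a d u \<noteq> 0 \<and> (\<forall>c<rdig a d. norm (type_weights a d tau u c) \<le> \<rho>)"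
      using \<delta>(2) by (simp add: r_def less_imp_le)
  qed
qed

lemma deriv_inverse_type_poly_nonzero:
  assumes u0: "0 < u0"
  shows "deriv (\<lambda>u. inverse (type_poly a d u)) (complex_of_real u0) \<noteq> 0"
proof -
  define P' where "P' = (\<Sum>j\<le>d. of_nat (a j) * (of_nat j * complex_of_real u0 ^ (j - 1)))"
  have "P' = complex_of_real (\<Sum>j\<le>d. real (a j) * (real j * u0 ^ (j - 1)))"
    by (simp add: P'_def)
  moreover have "0 < (\<Sum>j\<le>d. real (a j) * (real j * u0 ^ (j - 1)))"
    using u0 by (intro type_poly_deriv_pos) simp
  ultimately have "P' \<noteq> 0" by (metis of_real_eq_0_iff order_less_irrefl)
  have P: "type_poly a d (complex_of_real u0) \<noteq> 0"
    using type_poly_pos[of u0] u0 by (simp add: type_poly_of_real)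
  have "((\<lambda>u. inverse (type_poly a d u)) has_field_derivative
      - (P' * inverse (type_poly a d (complex_of_real u0) ^ Suc (Suc 0)))) (at (complex_of_real u0))"
    unfolding P'_def by (rule DERIV_inverse_fun[OF has_field_derivative_type_poly P])
  then have "deriv (\<lambda>u. inverse (type_poly a d u)) (complex_of_real u0) =
      - (P' * inverse (type_poly a d (complex_of_real u0) ^ Suc (Suc 0)))"
    by (rule DERIV_imp_deriv)
  then show ?thesis using \<open>P' \<noteq> 0\<close> P by simp
qed

text \<open>u \<mapsto> 1 / type_poly u has nonzero derivative at positive u, so it has a local holomorphic
  inverse; since it commutes with conjugation, the inverse maps real points to real points.\<close>

lemma type_poly_local_inverse:
  assumes u0: "0 < u0" and \<delta>: "0 < \<delta>"
  obtains V g where "open V" "complex_of_real (1 / type_poly a d u0) \<in> V" "g holomorphic_on V"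
    "\<And>z. z \<in> V \<Longrightarrow> g z \<in> ball (complex_of_real u0) \<delta>"
    "\<And>s. complex_of_real s \<in> V \<Longrightarrow>
       \<exists>u>0. g (complex_of_real s) = complex_of_real u \<and> type_poly a d u = 1 / s"
proof -
  define U0 where "U0 = complex_of_real u0"
  define f where "f = (\<lambda>u::complex. inverse (type_poly a d u))"
  define S0 where "S0 = {u::complex. type_poly a d u \<noteq> 0}"
  have S0: "open S0"
    unfolding S0_def
    by (rule open_Collect_neq) (auto intro: continuous_at_imp_continuous_on continuous_type_poly)
  have holf: "f holomorphic_on S0" unfolding f_def S0_def by (intro holomorphic_intros) auto
  have P0: "type_poly a d U0 = complex_of_real (type_poly a d u0)"
    by (simp add: U0_def type_poly_of_real)
  have U0S0: "U0 \<in> S0" using type_poly_pos[of u0] u0 P0 by (simp add: S0_def)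
  have "deriv f U0 \<noteq> 0" unfolding f_def U0_def by (rule deriv_inverse_type_poly_nonzero[OF u0])
  then obtain \<delta>0 where \<delta>0: "0 < \<delta>0" "ball U0 \<delta>0 \<subseteq> S0" "inj_on f (ball U0 \<delta>0)"
    using has_complex_derivative_locally_injective[OF holf U0S0 S0] by blast
  define S where "S = ball U0 (min \<delta>0 (min \<delta> u0))"
  have SS0: "S \<subseteq> S0" using \<delta>0 by (auto simp: S_def)
  have injS: "inj_on f S" using \<delta>0(3) by (rule inj_on_subset) (auto simp: S_def)
  have holS: "f holomorphic_on S" using holf SS0 by (rule holomorphic_on_subset)
  have oS: "open S" by (simp add: S_def)
  obtain g where g: "g holomorphic_on (f ` S)" "\<And>z. z \<in> S \<Longrightarrow> g (f z) = z"
    using holomorphic_has_inverse[OF holS oS injS] by metis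
  have V: "open (f ` S)" by (rule open_mapping_thm3[OF holS oS injS])
  have "U0 \<in> S" using \<delta>0 \<delta> u0 by (simp add: S_def)
  moreover have "f U0 = complex_of_real (1 / type_poly a d u0)" using P0 by (simp add: f_def inverse_eq_divide)
  ultimately have qV: "complex_of_real (1 / type_poly a d u0) \<in> f ` S" by (metis imageI)
  have gS: "g z \<in> S" "f (g z) = z" if "z \<in> f ` S" for z using that g(2) by auto
  have real: "\<exists>u>0. g (complex_of_real s) = complex_of_real u \<and> type_poly a d u = 1 / s"
    if sV: "complex_of_real s \<in> f ` S" for s
  proof -
    define w where "w = g (complex_of_real s)"
    have wS: "w \<in> S" and fw: "f w = complex_of_real s" using gS[OF sV] by (auto simp: w_def)
    have cnj_f: "f (cnj z) = cnj (f z)" for z by (simp add: f_def type_poly_cnj)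
    have "w \<in> \<real>"
      by (rule Reals_of_inj_on_ball_cnj[OF injS[unfolded S_def U0_def] cnj_f wS[unfolded S_def U0_def]])
        (simp add: fw)
    then have wr: "w = complex_of_real (Re w)" by (simp add: complex_is_Real_iff complex_eq_iff)
    have "\<bar>Re (w - U0)\<bar> < u0"
      using abs_Re_le_cmod[of "w - U0"] wS by (simp add: S_def dist_norm norm_minus_commute)
    then have upos: "0 < Re w" by (simp add: U0_def)
    have "complex_of_real s = inverse (type_poly a d (complex_of_real (Re w)))"
      using fw wr by (simp add: f_def)
    then have "complex_of_real s = complex_of_real (inverse (type_poly a d (Re w)))"
      by (simp add: type_poly_of_real)
    then have "s = 1 / type_poly a d (Re w)" by (simp only: of_real_eq_iff inverse_eq_divide)
    then have "type_poly a d (Re w) = 1 / s" by simp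
    then show ?thesis using upos wr unfolding w_def by blast
  qed
  have "S \<subseteq> ball (complex_of_real u0) \<delta>" by (auto simp: S_def U0_def)
  then show ?thesis
    using gS(1) by (intro that[OF V qV g(1) _ real]) blast+
qed

lemma weight_chart_exists:
  assumes q: "0 < q" "q < 1 / real (a 0)"
  obtains \<rho> V g where "0 \<le> \<rho>" "\<rho> < 1" "open V" "complex_of_real q \<in> V"
    "\<And>c. c < rdig a d \<Longrightarrow> (\<lambda>z. type_weights a d tau (g z) c) holomorphic_on V"
    "\<And>z. z \<in> V \<Longrightarrow> contracting_weights (type_weights a d tau (g z)) (rdig a d) \<rho>"
    "\<And>s. complex_of_real s \<in> V \<Longrightarrow>
       \<exists>u>0. g (complex_of_real s) = complex_of_real u \<and> type_poly a d u = 1 / s"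
proof -
  obtain u0 where u0: "0 < u0" "type_poly a d u0 = 1 / q"
    using exists_type_poly_eq[OF q] by blast
  obtain \<rho> \<delta> where \<rho>: "0 \<le> \<rho>" "\<rho> < 1" and "0 < \<delta>"
    and near: "\<And>u. u \<in> ball (complex_of_real u0) \<delta> \<Longrightarrow>
       type_poly a d u \<noteq> 0 \<and> (\<forall>c<rdig a d. norm (type_weights a d tau u c) \<le> \<rho>)"
    using type_weights_bounded_near[OF u0(1)] by blast
  obtain V g where V: "open V" "complex_of_real q \<in> V" and g: "g holomorphic_on V"
    and g_near: "\<And>z. z \<in> V \<Longrightarrow> g z \<in> ball (complex_of_real u0) \<delta>"
    and g_real: "\<And>s. complex_of_real s \<in> V \<Longrightarrow>
       \<exists>u>0. g (complex_of_real s) = complex_of_real u \<and> type_poly a d u = 1 / s"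
    using type_poly_local_inverse[OF u0(1) \<open>0 < \<delta>\<close>] u0(2) q(1) by auto
  show ?thesis
  proof (rule that[OF \<rho> V _ _ g_real])
    show "(\<lambda>z. type_weights a d tau (g z) c) holomorphic_on V" for c
      unfolding type_weights_def using near g_near by (intro holomorphic_intros g) auto
    show "contracting_weights (type_weights a d tau (g z)) (rdig a d) \<rho>" if "z \<in> V" for z
      using near[OF g_near[OF that]] rdig_ge_2 \<rho> sum_type_weights
      by (simp add: contracting_weights_def)
  qed
qed

end

lemma Fq_eq_digit_cdf: "Fq a d tau s = digit_cdf (rdig a d) (digit_weight a d tau s)"
  unfolding Fq_def nu_def digit_cdf_def digit_value_def ..

text \<open>g is a holomorphic local inverse of u \<mapsto> 1 / type_poly u around q, so the digit weights of
  nu_s are type_weights (g s) for real s in V.\<close>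

locale weight_chart = type_map +
  fixes q \<rho> :: real and V :: "complex set" and g :: "complex \<Rightarrow> complex"
  assumes \<rho>: "0 \<le> \<rho>" "\<rho> < 1" and V: "open V" "complex_of_real q \<in> V"
    and holomorphic_weights: "\<And>c. c < rdig a d \<Longrightarrow> (\<lambda>z. type_weights a d tau (g z) c) holomorphic_on V"
    and contracting: "\<And>z. z \<in> V \<Longrightarrow> contracting_weights (type_weights a d tau (g z)) (rdig a d) \<rho>"
    and real_on_reals: "\<And>s. complex_of_real s \<in> V \<Longrightarrow>
       \<exists>u>0. g (complex_of_real s) = complex_of_real u \<and> type_poly a d u = 1 / s"
begin

definition chart_cdf :: "real \<Rightarrow> complex \<Rightarrow> complex" where
  "chart_cdf y z = cdf_series (type_weights a d tau (g z)) (rdig a d) y"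

lemma holomorphic_chart_cdf: "chart_cdf y holomorphic_on V"
  unfolding chart_cdf_def
  using holomorphic_cdf_series[OF V(1) holomorphic_weights contracting \<rho>] rdig_ge_2 by simp

lemma digit_weight_chart:
  assumes s: "complex_of_real s \<in> V"
  shows "digit_distribution (rdig a d) (digit_weight a d tau s)"
    and "\<And>c. c < rdig a d \<Longrightarrow> 0 < digit_weight a d tau s c"
    and "contracting_weights (\<lambda>c. complex_of_real (digit_weight a d tau s c)) (rdig a d) \<rho>"
    and "\<And>y. y \<in> {0..1} \<Longrightarrow> Fq a d tau s y = Re (chart_cdf y (complex_of_real s))"
proof -
  define r where "r = rdig a d"
  define p where "p = digit_weight a d tau s"
  obtain u where u: "0 < u" "g (complex_of_real s) = complex_of_real u" "type_poly a d u = 1 / s"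
    using real_on_reals[OF s] by blast
  have s0: "0 < s" using u type_poly_pos[of u] by (simp add: zero_less_divide_iff)
  have p: "p c = u ^ tau c / type_poly a d u" if "c < r" for c
    unfolding p_def using digit_weight_eq[OF s0 u(1) u(3)] that by (simp add: r_def)
  show pos: "0 < p c" if "c < r" for c
    using p[OF that] type_weight_bounds(1)[OF u(1)] that by (simp add: r_def)
  have pW: "complex_of_real (p c) = type_weights a d tau (g (complex_of_real s)) c" if "c < r" for c
    using p[OF that] u(2) by (simp add: type_weights_of_real)
  have cw: "contracting_weights (type_weights a d tau (g (complex_of_real s))) r \<rho>"
    using contracting[OF s] by (simp add: r_def)
  then show cwp: "contracting_weights (\<lambda>c. complex_of_real (p c)) r \<rho>"
    by (simp add: contracting_weights_def pW)
  have "complex_of_real (\<Sum>c<r. p c) = (\<Sum>c<r. type_weights a d tau (g (complex_of_real s)) c)"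
    by (simp add: pW)
  then have "complex_of_real (\<Sum>c<r. p c) = 1" using cw by (simp add: contracting_weights_def)
  then have "(\<Sum>c<r. p c) = 1" by (simp only: of_real_eq_1_iff)
  moreover have p0: "p c = 0" if "r \<le> c" for c using that by (simp add: p_def digit_weight_def r_def)
  moreover have "0 \<le> p c" for c using pos[of c] p0[of c] by (cases "c < r") auto
  ultimately show dist: "digit_distribution r p"
    using rdig_ge_2 by (simp add: digit_distribution_def r_def)
  show "Fq a d tau s y = Re (chart_cdf y (complex_of_real s))" if "y \<in> {0..1}" for y
  proof -
    have "Fq a d tau s y = Re (cdf_series (\<lambda>c. complex_of_real (p c)) r y)"
      using digit_cdf_eq_Re_cdf_series[OF dist cwp that] by (simp add: Fq_eq_digit_cdf p_def r_def)
    also have "cdf_series (\<lambda>c. complex_of_real (p c)) r y = chart_cdf y (complex_of_real s)"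
      unfolding chart_cdf_def r_def[symmetric] using rdig_ge_2 pW by (intro cdf_series_cong) (auto simp: r_def)
    finally show ?thesis .
  qed
qed

abbreviation Fq_inv :: "real \<Rightarrow> real" where
  "Fq_inv \<equiv> inv_into {0..1} (Fq a d tau q)"

lemma Fq_inv:
  shows "\<And>x. x \<in> {0..1} \<Longrightarrow> Fq_inv x \<in> {0..1}" and "continuous_on {0..1} Fq_inv"
proof -
  note chart = digit_weight_chart[OF V(2)]
  have F: "Fq a d tau q = digit_cdf (rdig a d) (digit_weight a d tau q)" by (rule Fq_eq_digit_cdf)
  have "Fq a d tau q 0 = 0"
    using chart(4)[of 0] by (simp add: chart_cdf_def cdf_series_at_0)
  moreover have "Fq a d tau q 1 = 1"
    using digit_cdf_eq_1[OF chart(1)] by (simp add: F)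
  ultimately have "Fq a d tau q ` {0..1} = {0..1}" "continuous_on {0..1} Fq_inv"
    using continuous_on_inv_into_Icc[OF continuous_on_digit_cdf[OF chart(1,3,2)]
        strict_mono_on_digit_cdf[OF chart(1,3,2)]] by (simp_all add: F)
  then show "\<And>x. x \<in> {0..1} \<Longrightarrow> Fq_inv x \<in> {0..1}" "continuous_on {0..1} Fq_inv"
    by (metis inv_into_into)+
qed

lemma higher_deriv_Sp:
  assumes x: "x \<in> {0..1}" and s: "complex_of_real s \<in> V"
  shows "(deriv ^^ k) (\<lambda>s. Sp a d tau q s x) s = Re ((deriv ^^ k) (chart_cdf (Fq_inv x)) (complex_of_real s))"
    and "((deriv ^^ k) (\<lambda>s. Sp a d tau q s x) has_real_derivative
          Re ((deriv ^^ Suc k) (chart_cdf (Fq_inv x)) (complex_of_real s))) (at s)"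
proof -
  have I: "open {s. complex_of_real s \<in> V}"
    using continuous_open_vimage[OF V(1), of complex_of_real] by (simp add: vimage_def continuous_intros)
  have "Sp a d tau q s' x = Re (chart_cdf (Fq_inv x) (complex_of_real s'))" if "complex_of_real s' \<in> V" for s'
    unfolding Sp_def using digit_weight_chart(4)[OF that Fq_inv(1)[OF x]] .
  then show "(deriv ^^ k) (\<lambda>s. Sp a d tau q s x) s = Re ((deriv ^^ k) (chart_cdf (Fq_inv x)) (complex_of_real s))"
    and "((deriv ^^ k) (\<lambda>s. Sp a d tau q s x) has_real_derivative
          Re ((deriv ^^ Suc k) (chart_cdf (Fq_inv x)) (complex_of_real s))) (at s)"
    using higher_deriv_Re_of_holomorphic[OF holomorphic_chart_cdf V(1) I] s by auto
qed

lemma kth_deriv_exists_Sp: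
  assumes x: "x \<in> {0..1}"
  shows "kth_deriv_exists (\<lambda>s. Sp a d tau q s x) k q"
proof -
  have I: "open {s. complex_of_real s \<in> V}"
    using continuous_open_vimage[OF V(1), of complex_of_real] by (simp add: vimage_def continuous_intros)
  have diff: "(deriv ^^ j) (\<lambda>s. Sp a d tau q s x) differentiable (at s)" if "complex_of_real s \<in> V" for j s
    using higher_deriv_Sp(2)[OF x that] by (auto simp: real_differentiable_def)
  have "\<forall>\<^sub>F s in nhds q. (deriv ^^ j) (\<lambda>s. Sp a d tau q s x) differentiable (at s)" for j
    unfolding eventually_nhds using I V(2) diff by blast
  then show ?thesis
    unfolding kth_deriv_exists_def using diff[OF V(2)] by blast
qed

lemma continuous_on_Tk:
  assumes k: "0 < k"
  shows "continuous_on {0..1} (Tk a d tau k q)"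
proof -
  obtain R where R: "0 < R" "cball (complex_of_real q) R \<subseteq> V"
    using V open_contains_cball by blast
  have "continuous_on {0..1} (\<lambda>y. (deriv ^^ k) (chart_cdf y) (complex_of_real q))"
  proof (rule continuous_on_higher_deriv_parametric[OF V(1) R holomorphic_chart_cdf _ k])
    fix e :: real assume "0 < e"
    then obtain \<delta> where "0 < \<delta>" and \<delta>: "\<And>w y y'. contracting_weights w (rdig a d) \<rho> \<Longrightarrow>
        y \<in> {0..1} \<Longrightarrow> y' \<in> {0..1} \<Longrightarrow> \<bar>y - y'\<bar> < \<delta> \<Longrightarrow>
        norm (cdf_series w (rdig a d) y - cdf_series w (rdig a d) y') < e"
      by (rule cdf_series_uniformly_equicontinuous[OF \<rho>, where r = "rdig a d"]) blast
    then show "\<exists>d>0. \<forall>y\<in>{0..1}. \<forall>y'\<in>{0..1}. dist y y' < d \<longrightarrow>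
        (\<forall>z\<in>V. norm (chart_cdf y z - chart_cdf y' z) < e)"
      using contracting by (auto simp: chart_cdf_def dist_real_def)
  qed
  then have "continuous_on {0..1} (\<lambda>x. Re ((deriv ^^ k) (chart_cdf (Fq_inv x)) (complex_of_real q)))"
    by (intro continuous_intros continuous_on_compose2[OF _ Fq_inv(2)]) (auto intro: Fq_inv(1))
  then show ?thesis
    by (rule continuous_on_cong[THEN iffD1, rotated 2])
      (simp_all add: Tk_def higher_deriv_Sp(1)[OF _ V(2)])
qed

end

theorem mainTheorem9:
  fixes a :: "nat \<Rightarrow> nat" and d :: nat and tau :: "nat \<Rightarrow> nat"
  assumes "d \<ge> 1"
    and "\<forall>j\<le>d. a j > 0"
    and "\<forall>i < rdig a d. tau i \<le> d"
    and "\<forall>j\<le>d. card {i. i < rdig a d \<and> tau i = j} = a j"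
  shows "\<forall>q k. 0 < q \<and> q < 1 / real (a 0) \<and> k \<ge> 1 \<longrightarrow>
           (\<forall>x\<in>{0..1}. kth_deriv_exists (\<lambda>s. Sp a d tau q s x) k q) \<and>
           continuous_on {0..1} (Tk a d tau k q)"
proof (intro allI impI)
  fix q :: real and k :: nat
  assume "0 < q \<and> q < 1 / real (a 0) \<and> k \<ge> 1"
  then have q: "0 < q" "q < 1 / real (a 0)" and k: "0 < k" by auto
  interpret type_map a d tau
    using assms by unfold_locales
  obtain \<rho> V g where "0 \<le> \<rho>" "\<rho> < 1" "open V" "complex_of_real q \<in> V"
    "\<And>c. c < rdig a d \<Longrightarrow> (\<lambda>z. type_weights a d tau (g z) c) holomorphic_on V"
    "\<And>z. z \<in> V \<Longrightarrow> contracting_weights (type_weights a d tau (g z)) (rdig a d) \<rho>"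
    "\<And>s. complex_of_real s \<in> V \<Longrightarrow>
       \<exists>u>0. g (complex_of_real s) = complex_of_real u \<and> type_poly a d u = 1 / s"
    using weight_chart_exists[OF q] by blast
  then interpret weight_chart a d tau q \<rho> V g
    by unfold_locales
  show "(\<forall>x\<in>{0..1}. kth_deriv_exists (\<lambda>s. Sp a d tau q s x) k q) \<and> continuous_on {0..1} (Tk a d tau k q)"
    using kth_deriv_exists_Sp continuous_on_Tk[OF k] by blast
qed

end
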